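(* Let $n\in(-1,1)$ and let $\mathcal{S}$ be a $C^2$-smooth rotationally symmetric, strictly convex sphere (i.e. $\mathcal{S}\in\mathscr{W}$) whose astigmatism satisfies $s/\sin^{n+2}\theta\in L^2_{\sin\theta}(0,\pi)$. Then, with coefficients $\gamma_{m,n}$ such that $$s=\gamma_{0,n}\sin^{2n+2}\theta+\sin^{n+2}\theta\sum_{m=1}^\infty\gamma_{m,n}\mathrm{P}^{-n}_{n+m}(\cos\theta)$$ (equality in $L^2_{\sin\theta}(0,\pi)$ after division by $\sin^{n+2}\theta$), the following hold pointwise: $$r_1=C_1+\frac{\gamma_{0,n}}{2(n+1)}\sin^{2n+2}\theta+\sin^{n+2}\theta\sum_{m=1}^\infty\gamma_{m,n}\left\{\mathrm{P}^{-(n+2)}_{n+m}(\cos\theta)+\cot\theta\,\mathrm{P}^{-(n+1)}_{n+m}(\cos\theta)\right\},$$ $$r=C_2\cos\theta+C_1+\gamma_{0,n}\left[\frac{\sin^{2n+2}\theta}{2(n+1)}-\cos\theta\int_0^\theta\sin^{2n+1}\vartheta\,d\vartheta\right]+\sin^{n+2}\theta\sum_{m=1}^\infty\gamma_{m,n}\mathrm{P}^{-(n+2)}_{n+m}(\cos\theta),$$ where $C_1=r_1(0)$ and $C_2=r(0)-r_1(0)$.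
   Context: $\mathscr{W}$ is the set of embedded $C^2$-smooth topological 2-spheres in $\mathbb{R}^3$ that are rotationally symmetric and strictly convex, parametrised by the inverse Gauss map with $\theta\in[0,\pi]$ the angle between the outward normal and the symmetry axis; with support function $r=\vec X\cdot\hat n$, radii of curvature $r_1=\frac{\cos^2\theta}{\sin\theta}\frac{d}{d\theta}(r/\cos\theta)$, $r_2=r''+r$, and astigmatism $s=r_2-r_1$. $\mathrm{P}^\mu_\nu$ denotes the (Ferrers) associated Legendre function of the first kind. $L^2_{\sin\theta}(0,\pi)$: complex-valued functions square integrable w.r.t. $\sin\theta\,d\theta$. The functions $\{\mathrm{P}^{-n}_{n+m}(\cos\theta)\}_{m\ge0}$ (with $\mathrm{P}^{-n}_n(\cos\theta)\propto\sin^n\theta$) form an orthogonal basis of $L^2_{\sin\theta}(0,\pi)$ for $n\in(-1,1)$. *)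

theory Defs
  imports "HOL-Analysis.Analysis"
begin

definition hyp2F1_reg :: "real \<Rightarrow> real \<Rightarrow> real \<Rightarrow> real \<Rightarrow> real" where
  "hyp2F1_reg a b c z =
     (\<Sum>k. pochhammer a k * pochhammer b k * rGamma (c + real k) / fact k * z ^ k)"

text \<open>Ferrers associated Legendre function of the first kind (DLMF 14.3.1),
  for -1 < x < 1:  P^mu_nu(x) = ((1+x)/(1-x))^(mu/2) F(nu+1, -nu; 1-mu; (1-x)/2).\<close>
definition ferrersP :: "real \<Rightarrow> real \<Rightarrow> real \<Rightarrow> real" where
  "ferrersP mu nu x = ((1 + x) / (1 - x)) powr (mu / 2) * hyp2F1_reg (nu + 1) (- nu) (1 - mu) ((1 - x) / 2)"

text \<open>Radii of curvature and astigmatism in terms of the support function r(theta).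
  radius1 is r_1 = (cos^2/sin) d/dtheta (r/cos) = r + r' cot theta (valid for 0<theta<pi).\<close>
definition radius1 :: "(real \<Rightarrow> real) \<Rightarrow> real \<Rightarrow> real" where
  "radius1 r \<theta> = r \<theta> + deriv r \<theta> * cos \<theta> / sin \<theta>"

definition radius2 :: "(real \<Rightarrow> real) \<Rightarrow> real \<Rightarrow> real" where
  "radius2 r \<theta> = deriv (deriv r) \<theta> + r \<theta>"

definition astig :: "(real \<Rightarrow> real) \<Rightarrow> real \<Rightarrow> real" where
  "astig r \<theta> = radius2 r \<theta> - radius1 r \<theta>"

text \<open>Class W, represented through the support function: r(theta) is the support
  function of the surface along a meridian great circle of the Gauss sphere,
  theta being the angle between the outward normal and the symmetry axis; as a
  function on the whole real line it is even and 2pi-periodic. C^2-smoothness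
  and strict convexity (positive principal radii) of the surface.\<close>
definition in_W :: "(real \<Rightarrow> real) \<Rightarrow> bool" where
  "in_W r \<longleftrightarrow>
     (\<forall>\<theta>. (r has_real_derivative deriv r \<theta>) (at \<theta>)) \<and>
     (\<forall>\<theta>. (deriv r has_real_derivative deriv (deriv r) \<theta>) (at \<theta>)) \<and>
     continuous_on UNIV (deriv (deriv r)) \<and>
     (\<forall>\<theta>. r (- \<theta>) = r \<theta>) \<and>
     (\<forall>\<theta>. r (\<theta> + 2 * pi) = r \<theta>) \<and>
     (\<forall>\<theta>. radius2 r \<theta> > 0) \<and>
     (\<forall>\<theta>\<in>{0<..<pi}. radius1 r \<theta> > 0)"

end

theory Submission
  imports Defs
begin

text \<open>
  The derivatives of the principal radii are governed by the astigmatism \<open>s\<close>: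
  \<open>r\<^sub>1' = s cot \<theta>\<close> and \<open>(r' / sin \<theta>)' = s / sin \<theta>\<close>.  Hence \<open>r\<^sub>1(\<theta>) - C\<^sub>1\<close> and
  \<open>r'(\<theta>) / sin \<theta> - r''(0)\<close> are integrals over \<open>[0, \<theta>]\<close> of \<open>f g\<close>, where
  \<open>f = s / sin\<^bsup>n+2\<^esup> \<theta>\<close> is square integrable for \<open>sin \<theta> d\<theta>\<close> and the weight \<open>g\<close> is
  \<open>sin\<^bsup>n+1\<^esup> \<theta> cos \<theta>\<close> resp. \<open>sin\<^bsup>n+1\<^esup> \<theta>\<close>.  Since \<open>g\<^sup>2 \<le> sin \<theta> \<cdot> sin\<^bsup>2n+1\<^esup> \<theta>\<close> and
  \<open>2n + 1 > -1\<close>, integration against \<open>g\<close> is continuous for that norm (Cauchy-Schwarz), so it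
  may be applied term by term to the expansion of \<open>f\<close>.  The terms integrate in closed form:
  \<open>sin\<^bsup>k\<^esup> \<theta> P\<^bsup>-k\<^esup>\<^sub>\<nu>(cos \<theta>) = (1 - cos \<theta>)\<^bsup>k\<^esup> F(\<nu> + 1, -\<nu>; 1 + k; (1 - cos \<theta>) / 2)\<close> with the
  regularised hypergeometric \<open>F\<close>, and the contiguous relation
  \<open>(z\<^bsup>c-1\<^esup> F(c; z))' = z\<^bsup>c-2\<^esup> F(c - 1; z)\<close> turns into
  \<open>(sin\<^bsup>k+1\<^esup> \<theta> P\<^bsup>-k-1\<^esup>\<^sub>\<nu>(cos \<theta>))' = sin\<^bsup>k+1\<^esup> \<theta> P\<^bsup>-k\<^esup>\<^sub>\<nu>(cos \<theta>)\<close>.  Finally \<open>r = r\<^sub>1 - r' cot \<theta>\<close>.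
  Only the \<open>C\<^sup>2\<close> regularity and the evenness of \<open>r\<close> enter.
\<close>

lemma cos_gt_minus_one: "0 \<le> t \<Longrightarrow> t < pi \<Longrightarrow> -1 < cos t"
  using cos_monotone_0_pi[of t pi] by simp

lemma cos_lt_one: "0 < t \<Longrightarrow> t \<le> pi \<Longrightarrow> cos t < 1"
  using cos_monotone_0_pi[of 0 t] by simp

lemma powr_add_one: "0 \<le> x \<Longrightarrow> x powr (a + 1) = x powr a * x"
  for x :: real
  by (simp add: powr_add)

lemma powr_le_two_powr_abs: "1 \<le> (y::real) \<Longrightarrow> y \<le> 2 \<Longrightarrow> y powr b \<le> 2 powr \<bar>b\<bar>"
  by (rule order_trans[OF powr_mono[OF abs_ge_self] powr_mono2]) auto

lemma has_real_derivative_even_zero: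
  assumes even: "\<And>t. f (- t) = f t" and "(f has_real_derivative D) (at 0)"
  shows "D = 0"
proof -
  have "(f has_real_derivative D) (at (- 0))"
    using assms(2) by simp
  from DERIV_chain2[OF this DERIV_minus[OF DERIV_ident]]
  have "((\<lambda>t. f (- t)) has_real_derivative D * - 1) (at 0)" .
  then have "(f has_real_derivative - D) (at 0)"
    using even by simp
  from DERIV_unique[OF assms(2) this] show ?thesis
    by simp
qed

lemma has_integral_tendsto_at_right:
  fixes f F :: "real \<Rightarrow> real"
  assumes ab: "a < b" and lim: "(F \<longlongrightarrow> L) (at_right a)"
    and deriv: "\<And>t. a < t \<Longrightarrow> t \<le> b \<Longrightarrow> (F has_real_derivative f t) (at t)"
  shows "(f has_integral F b - L) {a..b}"
proof -
  define G where "G t = (if t = a then L else F t)" for t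
  have "continuous (at t within {a..b}) G" if t: "t \<in> {a..b}" for t
  proof (cases "t = a")
    case True
    have "\<forall>\<^sub>F s in at_right a. F s = G s"
      using eventually_at_right_less[of a] by eventually_elim (simp add: G_def)
    with lim have "(G \<longlongrightarrow> L) (at_right a)"
      by (rule Lim_transform_eventually)
    then show ?thesis
      unfolding continuous_within True at_within_Icc_at_right[OF ab] by (simp add: G_def)
  next
    case False
    then have "isCont F t"
      using t deriv[of t] DERIV_isCont by simp
    moreover have "\<forall>\<^sub>F s in nhds t. s \<in> {a<..}"
      using False t by (intro eventually_nhds_in_open) auto
    then have "\<forall>\<^sub>F s in nhds t. G s = F s"
      by eventually_elim (simp add: G_def)
    ultimately have "isCont G t"
      using isCont_cong by blast
    then show ?thesis
      by (rule continuous_at_imp_continuous_at_within)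
  qed
  then have "continuous_on {a..b} G"
    by (simp add: continuous_on_eq_continuous_within)
  moreover have "(G has_vector_derivative f t) (at t)" if t: "t \<in> {a<..<b}" for t
  proof -
    have "(F has_real_derivative f t) (at t)"
      using t by (intro deriv) auto
    then have "(G has_real_derivative f t) (at t)"
      by (rule has_field_derivative_transform_within_open[where S = "{a<..}"]) (use t in \<open>auto simp: G_def\<close>)
    then show ?thesis
      by (simp add: has_real_derivative_iff_has_vector_derivative)
  qed
  ultimately have "(f has_integral G b - G a) {a..b}"
    using ab by (intro fundamental_theorem_of_calculus_interior) auto
  then show ?thesis
    using ab by (simp add: G_def)
qed

lemma sums_Suc_of_tendsto:
  fixes f :: "nat \<Rightarrow> real"
  assumes "(\<lambda>M. a + (\<Sum>m\<in>{1..M}. f m)) \<longlonglongrightarrow> L"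
  shows "(\<lambda>m. f (Suc m)) sums (L - a)"
proof -
  have "(\<lambda>M. a + (\<Sum>m\<in>{1..M}. f m) - a) \<longlonglongrightarrow> L - a"
    by (intro tendsto_diff assms tendsto_const)
  then show ?thesis
    by (simp add: sums_def sum.atLeast1_atMost_eq)
qed

lemma abs_mult_le_weighted:
  fixes h g w G c :: real
  assumes w: "0 \<le> w" and G: "0 \<le> G" and g: "g\<^sup>2 \<le> w * G" and c: "c > 0"
  shows "\<bar>h * g\<bar> \<le> c / 2 * (h\<^sup>2 * w) + 1 / (2 * c) * G"
proof (cases "w = 0")
  case True
  then show ?thesis
    using g G c by simp
next
  case False
  with w have w: "w > 0"
    by simp
  define u v where "u = \<bar>h\<bar>" and "v = \<bar>g\<bar>"
  have "0 \<le> (c * u * w - v)\<^sup>2"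
    by simp
  then have "2 * c * (u * v) * w \<le> (c * u * w)\<^sup>2 + v\<^sup>2"
    by (simp add: power2_eq_square algebra_simps)
  also have "\<dots> \<le> (c * u * w)\<^sup>2 + w * G"
    using g by (simp add: v_def)
  also have "\<dots> = w * (c\<^sup>2 * u\<^sup>2 * w + G)"
    by (simp add: power2_eq_square algebra_simps)
  finally have "w * (2 * c * (u * v)) \<le> w * (c\<^sup>2 * u\<^sup>2 * w + G)"
    by (simp add: algebra_simps)
  then have "2 * c * (u * v) \<le> c\<^sup>2 * u\<^sup>2 * w + G"
    using w by simp
  then show ?thesis
    using c by (simp add: u_def v_def abs_mult power2_eq_square field_simps)
qed

lemma tendsto_zero_of_weighted_bound:
  fixes D A :: "nat \<Rightarrow> real"
  assumes bound: "\<And>M c. c > 0 \<Longrightarrow> \<bar>D M\<bar> \<le> c / 2 * A M + K / (2 * c)"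
    and K: "K \<ge> 0" and A: "A \<longlonglongrightarrow> 0"
  shows "D \<longlonglongrightarrow> 0"
proof (rule LIMSEQ_I)
  fix e :: real
  assume e: "e > 0"
  define c where "c = (K + 1) / e"
  have c: "c > 0" "K / (2 * c) < e / 2"
    using K e by (simp_all add: c_def field_simps)
  obtain M0 where M0: "\<And>M. M \<ge> M0 \<Longrightarrow> norm (A M) < e / c"
    using LIMSEQ_D[OF A, of "e / c"] c e by auto
  have "norm (D M) < e" if "M \<ge> M0" for M
  proof -
    have "c * \<bar>A M\<bar> < e"
      using M0[OF that] c by (simp add: field_simps)
    moreover have "c * A M \<le> c * \<bar>A M\<bar>"
      using c by (intro mult_left_mono) auto
    ultimately have "c / 2 * A M < e / 2"
      by linarith
    then show ?thesis
      using bound[OF c(1), of M] c(2) by simp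
  qed
  then show "\<exists>M0. \<forall>M\<ge>M0. norm (D M - 0) < e"
    by auto
qed

lemma tendsto_integral_mult_zero:
  fixes h :: "nat \<Rightarrow> real \<Rightarrow> real" and w g G :: "real \<Rightarrow> real"
  assumes hw: "\<And>M. (\<lambda>t. (h M t)\<^sup>2 * w t) integrable_on S"
    and hg: "\<And>M. (\<lambda>t. h M t * g t) integrable_on S"
    and G: "G integrable_on S"
    and nonneg: "\<And>t. t \<in> S \<Longrightarrow> 0 \<le> w t" "\<And>t. t \<in> S \<Longrightarrow> 0 \<le> G t"
    and g: "\<And>t. t \<in> S \<Longrightarrow> (g t)\<^sup>2 \<le> w t * G t"
    and lim: "(\<lambda>M. integral S (\<lambda>t. (h M t)\<^sup>2 * w t)) \<longlonglongrightarrow> 0"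
  shows "(\<lambda>M. integral S (\<lambda>t. h M t * g t)) \<longlonglongrightarrow> 0"
proof (rule tendsto_zero_of_weighted_bound[OF _ _ lim])
  show "integral S G \<ge> 0"
    using G nonneg(2) by (rule integral_nonneg)
  fix M :: nat and c :: real
  assume c: "c > 0"
  have "norm (integral S (\<lambda>t. h M t * g t))
          \<le> integral S (\<lambda>t. c / 2 * ((h M t)\<^sup>2 * w t) + 1 / (2 * c) * G t)"
    using abs_mult_le_weighted[OF nonneg(1) nonneg(2) g c] hw hg G
    by (intro integral_norm_bound_integral integrable_add integrable_on_mult_right) auto
  also have "\<dots> = c / 2 * integral S (\<lambda>t. (h M t)\<^sup>2 * w t) + 1 / (2 * c) * integral S G"
    using hw[of M] G by (simp only: integral_add integrable_on_mult_right integral_mult_right)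
  finally show "\<bar>integral S (\<lambda>t. h M t * g t)\<bar>
                  \<le> c / 2 * integral S (\<lambda>t. (h M t)\<^sup>2 * w t) + integral S G / (2 * c)"
    by simp
qed

lemma has_integral_sin_powr_cos:
  assumes n: "n > -1" and \<theta>: "0 < \<theta>" "\<theta> < pi"
  shows "((\<lambda>t. sin t powr n * (sin t powr (n + 1) * cos t)) has_integral
           sin \<theta> powr (2 * n + 2) / (2 * n + 2)) {0..\<theta>}"
proof -
  have "\<forall>t\<in>{0..\<theta>}. 0 \<le> sin t"
    using \<theta> by (auto intro: sin_ge_zero)
  then have "continuous_on {0..\<theta>} (\<lambda>t. sin t powr (2 * n + 2) / (2 * n + 2))"
    using n by (intro continuous_intros continuous_on_powr') auto
  moreover have "((\<lambda>t. sin t powr (2 * n + 2) / (2 * n + 2)) has_real_derivative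
                   sin t powr n * (sin t powr (n + 1) * cos t)) (at t)"
    if "t \<in> {0<..<\<theta>}" for t
  proof -
    have "sin t > 0"
      using that \<theta> by (simp add: sin_gt_zero)
    then have "((\<lambda>t. sin t powr (2 * n + 2)) has_real_derivative
                 (2 * n + 2) * sin t powr (2 * n + 2 - 1) * cos t) (at t)"
      by (rule DERIV_chain2[OF has_real_derivative_powr DERIV_sin])
    from DERIV_cdivide[OF this, of "2 * n + 2"]
    have "((\<lambda>t. sin t powr (2 * n + 2) / (2 * n + 2)) has_real_derivative
            (2 * n + 2) * sin t powr (2 * n + 2 - 1) * cos t / (2 * n + 2)) (at t)" .
    moreover have "(2 * n + 2) * sin t powr (2 * n + 2 - 1) * cos t / (2 * n + 2)
                   = sin t powr n * (sin t powr (n + 1) * cos t)"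
    proof -
      have "2 * n + 2 - 1 = n + (n + 1)" "2 * n + 2 \<noteq> 0"
        using n by simp_all
      then show ?thesis
        by (simp only: powr_add) simp
    qed
    ultimately show ?thesis
      by simp
  qed
  ultimately show ?thesis
    using fundamental_theorem_of_calculus_interior[of 0 \<theta>] \<theta>
    by (fastforce simp: has_real_derivative_iff_has_vector_derivative)
qed

section \<open>The Gauss hypergeometric series\<close>

definition hyp2F1_coeff :: "real \<Rightarrow> real \<Rightarrow> real \<Rightarrow> nat \<Rightarrow> real" where
  "hyp2F1_coeff a b c k = pochhammer a k * pochhammer b k * rGamma (c + real k) / fact k"

lemma hyp2F1_reg_eq_suminf: "hyp2F1_reg a b c = (\<lambda>z. \<Sum>k. hyp2F1_coeff a b c k * z ^ k)"
  by (simp add: hyp2F1_reg_def hyp2F1_coeff_def fun_eq_iff)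

lemma hyp2F1_coeff_Suc:
  assumes "c + real k \<noteq> 0"
  shows "hyp2F1_coeff a b c (Suc k) =
           hyp2F1_coeff a b c k * ((a + k) * (b + k) / ((k + 1) * (c + k)))"
proof -
  have "rGamma (c + real (Suc k)) = rGamma (c + real k) / (c + k)"
    using rGamma_plus1[of "c + real k"] assms by (simp add: field_simps add_ac)
  then show ?thesis
    by (simp add: hyp2F1_coeff_def pochhammer_Suc field_simps)
qed

lemma pochhammer_fact_sums:
  fixes p z :: real
  assumes "\<bar>z\<bar> < 1"
  shows "(\<lambda>k. pochhammer p k / fact k * z ^ k) sums (1 - z) powr (- p)"
proof -
  have "((- p) gchoose k) * (- z) ^ k = pochhammer p k / fact k * z ^ k" for k
  proof -
    have "(- 1) ^ k * (- z) ^ k = z ^ k" by (simp flip: power_mult_distrib)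
    then show ?thesis by (simp add: gbinomial_pochhammer)
  qed
  then show ?thesis
    using gen_binomial_real[of "- z" "- p"] assms by simp
qed

lemma hyp2F1_coeff_Suc_le:
  assumes c: "c > 0" and ab: "a + b \<le> p + c" "a * b \<le> p * c" and k: "\<bar>a\<bar> + \<bar>b\<bar> \<le> real k"
  shows "\<bar>hyp2F1_coeff a b c (Suc k)\<bar> \<le> \<bar>hyp2F1_coeff a b c k\<bar> * ((p + real k) / (real k + 1))"
proof -
  define x where "x = real k"
  have ck: "c + x > 0"
    using c by (simp add: x_def)
  have "0 \<le> (a + x) * (b + x)"
    using k by (simp add: x_def)
  moreover have "(a + x) * (b + x) \<le> (p + x) * (c + x)"
    using ab mult_right_mono[OF ab(1), of x] by (simp add: x_def algebra_simps)
  ultimately have "\<bar>(a + x) * (b + x)\<bar> / ((x + 1) * (c + x)) \<le> (p + x) * (c + x) / ((x + 1) * (c + x))"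
    using ck by (intro divide_right_mono) (auto simp: x_def)
  also have "\<dots> = (p + x) / (x + 1)"
    using ck by (simp add: x_def)
  finally have ratio: "\<bar>(a + x) * (b + x)\<bar> / ((x + 1) * (c + x)) \<le> (p + x) / (x + 1)" .
  have "\<bar>hyp2F1_coeff a b c (Suc k)\<bar> = \<bar>hyp2F1_coeff a b c k\<bar> * (\<bar>(a + x) * (b + x)\<bar> / ((x + 1) * (c + x)))"
    using hyp2F1_coeff_Suc[of c k a b] ck by (simp add: x_def abs_mult)
  also have "\<dots> \<le> \<bar>hyp2F1_coeff a b c k\<bar> * ((p + x) / (x + 1))"
    using ratio by (rule mult_left_mono) simp
  finally show ?thesis
    by (simp add: x_def)
qed

text \<open>By \<open>hyp2F1_coeff_Suc_le\<close> the coefficients eventually decay at least as fast as those of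
  the binomial series of \<open>(1 - z) powr (- p)\<close>.\<close>
lemma hyp2F1_coeff_bound:
  assumes c: "c > 0" and p: "p > 0" and ab: "a + b \<le> p + c" "a * b \<le> p * c"
  shows "\<exists>C. \<forall>k. \<bar>hyp2F1_coeff a b c k\<bar> \<le> C * (pochhammer p k / fact k)"
proof -
  define d where "d k = pochhammer p k / fact k" for k
  define K where "K = nat \<lceil>\<bar>a\<bar> + \<bar>b\<bar>\<rceil>"
  define C where "C = (\<Sum>k\<le>K. \<bar>hyp2F1_coeff a b c k\<bar> / d k)"
  have d_pos: "d k > 0" for k
    using p by (simp add: d_def pochhammer_pos)
  have initial: "\<bar>hyp2F1_coeff a b c k\<bar> \<le> C * d k" if "k \<le> K" for k
  proof -
    have "\<bar>hyp2F1_coeff a b c k\<bar> / d k \<le> C"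
      unfolding C_def by (rule member_le_sum) (use that d_pos in \<open>auto intro: divide_nonneg_pos\<close>)
    then show ?thesis
      using d_pos[of k] by (simp add: field_simps)
  qed
  have K: "\<bar>a\<bar> + \<bar>b\<bar> \<le> real K"
    unfolding K_def using le_of_int_ceiling[of "\<bar>a\<bar> + \<bar>b\<bar>"] by linarith
  have tail: "\<bar>hyp2F1_coeff a b c (K + j)\<bar> \<le> C * d (K + j)" for j
  proof (induction j)
    case 0
    then show ?case
      using initial by simp
  next
    case (Suc j)
    let ?k = "K + j"
    have "\<bar>hyp2F1_coeff a b c (Suc ?k)\<bar> \<le> \<bar>hyp2F1_coeff a b c ?k\<bar> * ((p + real ?k) / (real ?k + 1))"
      using c ab K by (intro hyp2F1_coeff_Suc_le) auto
    also have "\<dots> \<le> C * d ?k * ((p + real ?k) / (real ?k + 1))"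
      using Suc.IH p by (intro mult_right_mono) auto
    also have "\<dots> = C * d (Suc ?k)"
      by (simp add: d_def pochhammer_Suc field_simps)
    finally show ?case
      by simp
  qed
  have "\<bar>hyp2F1_coeff a b c k\<bar> \<le> C * d k" for k
    using initial tail[of "k - K"] by (cases "k \<le> K") auto
  then show ?thesis
    unfolding d_def by blast
qed

lemma summable_hyp2F1_coeff:
  assumes c: "c > 0" and z: "\<bar>z\<bar> < 1"
  shows "summable (\<lambda>k. \<bar>hyp2F1_coeff a b c k * z ^ k\<bar>)"
proof -
  define p where "p = \<bar>a\<bar> + \<bar>b\<bar> + \<bar>a * b\<bar> / c + 1"
  have "\<bar>a * b\<bar> / c \<ge> 0"
    using c by simp
  then have "a + b \<le> p + c" "p > 0"
    unfolding p_def using c abs_ge_self[of a] abs_ge_self[of b] abs_ge_zero[of a] abs_ge_zero[of b]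
    by linarith+
  moreover have "a * b \<le> p * c"
  proof -
    have "a * b \<le> \<bar>a * b\<bar>" by simp
    also have "\<dots> \<le> p * c"
      using c by (simp add: p_def field_simps)
    finally show ?thesis .
  qed
  ultimately obtain C where C: "\<And>k. \<bar>hyp2F1_coeff a b c k\<bar> \<le> C * (pochhammer p k / fact k)"
    using hyp2F1_coeff_bound[of c p a b] c by blast
  have "summable (\<lambda>k. C * (pochhammer p k / fact k * \<bar>z\<bar> ^ k))"
    using pochhammer_fact_sums[of "\<bar>z\<bar>" p] z by (intro summable_mult sums_summable) auto
  then show ?thesis
  proof (rule summable_comparison_test')
    show "norm \<bar>hyp2F1_coeff a b c k * z ^ k\<bar> \<le> C * (pochhammer p k / fact k * \<bar>z\<bar> ^ k)" for k
      using mult_right_mono[OF C[of k], of "\<bar>z\<bar> ^ k"] by (simp add: abs_mult power_abs)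
  qed
qed

lemma hyp2F1_reg_bound:
  assumes "c > 0" "p > 0" "a + b \<le> p + c" "a * b \<le> p * c"
  shows "\<exists>C. \<forall>z. 0 \<le> z \<longrightarrow> z < 1 \<longrightarrow> \<bar>hyp2F1_reg a b c z\<bar> \<le> C * (1 - z) powr (- p)"
proof -
  obtain C where C: "\<And>k. \<bar>hyp2F1_coeff a b c k\<bar> \<le> C * (pochhammer p k / fact k)"
    using hyp2F1_coeff_bound[OF assms] by blast
  have "\<bar>hyp2F1_reg a b c z\<bar> \<le> C * (1 - z) powr (- p)" if z: "0 \<le> z" "z < 1" for z
  proof -
    have binom: "(\<lambda>k. C * (pochhammer p k / fact k * z ^ k)) sums (C * (1 - z) powr (- p))"
      using pochhammer_fact_sums[of z p] z by (intro sums_mult) simp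
    have abs_summable: "summable (\<lambda>k. \<bar>hyp2F1_coeff a b c k * z ^ k\<bar>)"
      using summable_hyp2F1_coeff assms(1) z by simp
    have "\<bar>hyp2F1_reg a b c z\<bar> \<le> (\<Sum>k. \<bar>hyp2F1_coeff a b c k * z ^ k\<bar>)"
      using summable_norm[OF abs_summable[unfolded real_norm_def[symmetric]]]
      by (simp add: hyp2F1_reg_eq_suminf)
    also have "\<dots> \<le> (\<Sum>k. C * (pochhammer p k / fact k * z ^ k))"
    proof (rule suminf_le)
      show "\<bar>hyp2F1_coeff a b c k * z ^ k\<bar> \<le> C * (pochhammer p k / fact k * z ^ k)" for k
        using mult_right_mono[OF C[of k], of "z ^ k"] z by (simp add: abs_mult mult.assoc)
    qed (use abs_summable sums_summable[OF binom] in auto)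
    also have "\<dots> = C * (1 - z) powr (- p)"
      using binom sums_unique by metis
    finally show ?thesis .
  qed
  then show ?thesis by blast
qed

lemma hyp2F1_reg_has_real_derivative:
  assumes "c > 0" "\<bar>z\<bar> < 1"
  shows "(hyp2F1_reg a b c has_real_derivative (\<Sum>k. diffs (hyp2F1_coeff a b c) k * z ^ k)) (at z)"
  unfolding hyp2F1_reg_eq_suminf
  by (rule termdiffs_strong'[where K = 1])
     (use assms summable_hyp2F1_coeff summable_rabs_cancel in auto)

lemma isCont_hyp2F1_reg: "c > 0 \<Longrightarrow> \<bar>z\<bar> < 1 \<Longrightarrow> isCont (hyp2F1_reg a b c) z"
  using hyp2F1_reg_has_real_derivative DERIV_isCont by blast

lemma hyp2F1_reg_contiguous:
  assumes c: "c > 0" and z: "\<bar>z\<bar> < 1"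
  shows "hyp2F1_reg a b (c - 1) z
           = (c - 1) * hyp2F1_reg a b c z + z * (\<Sum>k. diffs (hyp2F1_coeff a b c) k * z ^ k)"
proof -
  define A where "A = hyp2F1_coeff a b c"
  have summable_A: "summable (\<lambda>k. A k * w ^ k)" if "\<bar>w\<bar> < 1" for w
    unfolding A_def using summable_hyp2F1_coeff[OF c that] by (rule summable_rabs_cancel)
  have F: "(\<lambda>k. A k * z ^ k) sums hyp2F1_reg a b c z"
    using summable_A[OF z] by (simp add: A_def hyp2F1_reg_eq_suminf summable_sums)
  have "summable (\<lambda>k. diffs A k * z ^ k)"
    by (rule termdiff_converges[where K = 1]) (use z summable_A in auto)
  then have "(\<lambda>k. z * (diffs A k * z ^ k)) sums (z * (\<Sum>k. diffs A k * z ^ k))"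
    by (intro sums_mult summable_sums)
  moreover have "z * (diffs A k * z ^ k) = real (Suc k) * A (Suc k) * z ^ Suc k" for k
    by (simp add: diffs_def algebra_simps)
  ultimately have "(\<lambda>k. real k * A k * z ^ k) sums (z * (\<Sum>k. diffs A k * z ^ k))"
    using sums_Suc_iff[of "\<lambda>k. real k * A k * z ^ k"] by simp
  from sums_add[OF sums_mult[OF F, of "c - 1"] this]
  have "(\<lambda>k. (c - 1) * (A k * z ^ k) + real k * A k * z ^ k) sums
          ((c - 1) * hyp2F1_reg a b c z + z * (\<Sum>k. diffs A k * z ^ k))" .
  moreover have "(c - 1) * (A k * z ^ k) + real k * A k * z ^ k = hyp2F1_coeff a b (c - 1) k * z ^ k"
    for k
  proof -
    have "rGamma (c - 1 + real k) = (c - 1 + real k) * rGamma (c + real k)"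
      using rGamma_plus1[of "c - 1 + real k"] by (simp add: add_ac)
    then have "hyp2F1_coeff a b (c - 1) k = (c - 1 + real k) * A k"
      unfolding A_def hyp2F1_coeff_def by simp
    then show ?thesis
      by (simp only:) (simp add: algebra_simps)
  qed
  ultimately show ?thesis
    by (simp add: A_def hyp2F1_reg_eq_suminf sums_iff)
qed

lemma hyp2F1_reg_contiguous_has_real_derivative:
  assumes c: "c > 0" and z: "0 < z" "z < 1"
  shows "((\<lambda>z. z powr (c - 1) * hyp2F1_reg a b c z) has_real_derivative
           z powr (c - 2) * hyp2F1_reg a b (c - 1) z) (at z)"
proof -
  define F' where "F' = (\<Sum>k. diffs (hyp2F1_coeff a b c) k * z ^ k)"
  have z1: "\<bar>z\<bar> < 1"
    using z by simp
  have "((\<lambda>z. z powr (c - 1) * hyp2F1_reg a b c z) has_real_derivative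
          (c - 1) * z powr (c - 1 - 1) * hyp2F1_reg a b c z + F' * z powr (c - 1)) (at z)"
    using has_real_derivative_powr[of z "c - 1"] hyp2F1_reg_has_real_derivative[OF c z1] z
    unfolding F'_def by (intro DERIV_mult) auto
  moreover have "z powr (c - 1) = z powr (c - 2) * z"
    using z powr_add[of z "c - 2" 1] by simp
  ultimately show ?thesis
    by (simp add: hyp2F1_reg_contiguous[OF c z1] F'_def algebra_simps)
qed

section \<open>Ferrers functions of negative order\<close>

text \<open>The weight \<open>(1 - x\<^sup>2) powr (k / 2)\<close> turns \<open>ferrersP (- k) \<nu>\<close> into a function
  that is continuous up to \<open>x = 1\<close>, where it vanishes.\<close>
definition ferrersP_weighted :: "real \<Rightarrow> real \<Rightarrow> real \<Rightarrow> real" where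
  "ferrersP_weighted k \<nu> x = (1 - x) powr k * hyp2F1_reg (\<nu> + 1) (- \<nu>) (1 + k) ((1 - x) / 2)"

lemma ferrersP_weighted_eq:
  assumes "-1 < x" "x < 1"
  shows "(1 - x\<^sup>2) powr (k / 2) * ferrersP (- k) \<nu> x = ferrersP_weighted k \<nu> x"
proof -
  have pos: "1 - x > 0" "1 + x > 0"
    using assms by auto
  have "(1 - x\<^sup>2) powr (k / 2) = (1 - x) powr (k / 2) * (1 + x) powr (k / 2)"
    using pos by (simp add: power2_eq_square algebra_simps flip: powr_mult)
  moreover have "((1 + x) / (1 - x)) powr (- k / 2) = (1 - x) powr (k / 2) / (1 + x) powr (k / 2)"
    using pos by (simp add: powr_divide powr_minus_divide)
  moreover have "(1 - x) powr (k / 2) * (1 - x) powr (k / 2) = (1 - x) powr k"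
    by (simp flip: powr_add)
  ultimately have "(1 - x\<^sup>2) powr (k / 2) * ((1 + x) / (1 - x)) powr (- k / 2) = (1 - x) powr k"
    using pos by simp
  then show ?thesis
    by (simp add: ferrersP_weighted_def ferrersP_def mult.assoc[symmetric])
qed

lemma sin_powr_ferrersP:
  assumes "0 < t" "t < pi"
  shows "sin t powr k * ferrersP (- k) \<nu> (cos t) = ferrersP_weighted k \<nu> (cos t)"
proof -
  have "sin t > 0"
    using assms by (simp add: sin_gt_zero)
  have "sin t powr k = (sin t powr 2) powr (k / 2)"
    by (simp add: powr_powr)
  also have "\<dots> = (1 - (cos t)\<^sup>2) powr (k / 2)"
    using \<open>sin t > 0\<close> by (simp add: powr_realpow sin_squared_eq)
  finally have "sin t powr k = (1 - (cos t)\<^sup>2) powr (k / 2)" .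
  then show ?thesis
    using ferrersP_weighted_eq cos_gt_minus_one cos_lt_one assms by simp
qed

lemma ferrersP_weighted_has_real_derivative:
  assumes k: "k > -1" and x: "-1 < x" "x < 1"
  shows "(ferrersP_weighted (k + 1) \<nu> has_real_derivative - ferrersP_weighted k \<nu> x) (at x)"
proof -
  define G where "G z = z powr (k + 1) * hyp2F1_reg (\<nu> + 1) (- \<nu>) (k + 2) z" for z
  have dG: "(G has_real_derivative ((1 - x) / 2) powr k * hyp2F1_reg (\<nu> + 1) (- \<nu>) (1 + k) ((1 - x) / 2))
          (at ((1 - x) / 2))"
    using hyp2F1_reg_contiguous_has_real_derivative[of "k + 2" "(1 - x) / 2" "\<nu> + 1" "- \<nu>"] k x
    by (simp add: G_def[abs_def] add_ac)
  have "((\<lambda>y. (1 - y) / 2) has_real_derivative - 1 / 2) (at x)"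
    by (auto intro!: derivative_eq_intros)
  from DERIV_cmult[OF DERIV_chain2[OF dG this], of "2 powr (k + 1)"]
  have "((\<lambda>y. 2 powr (k + 1) * G ((1 - y) / 2)) has_real_derivative
          2 powr (k + 1) * (((1 - x) / 2) powr k * hyp2F1_reg (\<nu> + 1) (- \<nu>) (1 + k) ((1 - x) / 2) * (- 1 / 2)))
          (at x)" .
  moreover have "2 powr (k + 1) * (((1 - x) / 2) powr k * hyp2F1_reg (\<nu> + 1) (- \<nu>) (1 + k) ((1 - x) / 2) * (- 1 / 2))
      = - ferrersP_weighted k \<nu> x"
    using x by (simp add: ferrersP_weighted_def powr_add powr_divide)
  ultimately have deriv:
    "((\<lambda>y. 2 powr (k + 1) * G ((1 - y) / 2)) has_real_derivative - ferrersP_weighted k \<nu> x) (at x)"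
    by simp
  have eq: "2 powr (k + 1) * G ((1 - y) / 2) = ferrersP_weighted (k + 1) \<nu> y" if "y \<in> {..<1}" for y
  proof -
    have "2 powr (k + 1) * ((1 - y) / 2) powr (k + 1) = (1 - y) powr (k + 1)"
      using that by (simp add: powr_divide)
    moreover have "1 + (k + 1) = k + 2"
      by simp
    ultimately show ?thesis
      unfolding G_def ferrersP_weighted_def by (simp only: mult.assoc[symmetric])
  qed
  show ?thesis
  proof (rule has_field_derivative_transform_within_open[OF deriv, where S = "{..<1}"])
    show "x \<in> {..<1}"
      using x by simp
    show "open {..<1::real}"
      by simp
  qed (rule eq)
qed

lemma continuous_on_ferrersP_weighted:
  assumes "k > 0"
  shows "continuous_on {-1<..1} (ferrersP_weighted k \<nu>)"
proof -
  have "continuous_on {-1<..1} (\<lambda>x. (1 - x) powr k)"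
    using assms by (intro continuous_on_powr') (auto intro!: continuous_intros)
  moreover have "continuous_on {-1<..1} (\<lambda>x. hyp2F1_reg (\<nu> + 1) (- \<nu>) (1 + k) ((1 - x) / 2))"
    using assms
    by (intro continuous_at_imp_continuous_on ballI isCont_o2[OF _ isCont_hyp2F1_reg])
       (auto intro!: continuous_intros)
  ultimately show ?thesis
    unfolding ferrersP_weighted_def by (rule continuous_on_mult)
qed

lemma ferrersP_weighted_cos_has_real_derivative:
  assumes "k > -1" "0 < t" "t < pi"
  shows "((\<lambda>t. ferrersP_weighted (k + 1) \<nu> (cos t)) has_real_derivative
           sin t * ferrersP_weighted k \<nu> (cos t)) (at t)"
proof -
  have "(ferrersP_weighted (k + 1) \<nu> has_real_derivative - ferrersP_weighted k \<nu> (cos t)) (at (cos t))"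
    using assms by (intro ferrersP_weighted_has_real_derivative cos_gt_minus_one cos_lt_one) auto
  from DERIV_chain2[OF this DERIV_cos] show ?thesis
    by (simp add: mult.commute)
qed

lemma continuous_on_ferrersP_weighted_cos:
  assumes "k > 0" "\<theta> < pi"
  shows "continuous_on {0..\<theta>} (\<lambda>t. ferrersP_weighted k \<nu> (cos t))"
  using assms
  by (intro continuous_on_compose2[OF continuous_on_ferrersP_weighted[OF assms(1)] continuous_on_cos])
     (auto intro!: continuous_intros cos_gt_minus_one)

lemma has_integral_ferrersP_sin_powr:
  assumes k: "k > -1" and \<theta>: "0 < \<theta>" "\<theta> < pi"
  shows "((\<lambda>t. ferrersP (- k) \<nu> (cos t) * sin t powr (k + 1)) has_integral
           sin \<theta> powr (k + 1) * ferrersP (- (k + 1)) \<nu> (cos \<theta>)) {0..\<theta>}"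
proof -
  define \<Phi> where "\<Phi> t = ferrersP_weighted (k + 1) \<nu> (cos t)" for t
  have "(\<Phi> has_real_derivative ferrersP (- k) \<nu> (cos t) * sin t powr (k + 1)) (at t)"
    if "t \<in> {0<..<\<theta>}" for t
  proof -
    have t: "0 < t" "t < pi"
      using that \<theta> by auto
    then have "sin t > 0"
      by (simp add: sin_gt_zero)
    then show ?thesis
      using ferrersP_weighted_cos_has_real_derivative[OF k t, of \<nu>] sin_powr_ferrersP[OF t, of k \<nu>]
      by (simp add: \<Phi>_def[abs_def] powr_add mult_ac)
  qed
  then have "((\<lambda>t. ferrersP (- k) \<nu> (cos t) * sin t powr (k + 1)) has_integral \<Phi> \<theta> - \<Phi> 0) {0..\<theta>}"
    using \<theta> k continuous_on_ferrersP_weighted_cos[of "k + 1" \<theta> \<nu>]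
    by (intro fundamental_theorem_of_calculus_interior)
       (auto simp: \<Phi>_def[abs_def] has_real_derivative_iff_has_vector_derivative)
  then show ?thesis
    using sin_powr_ferrersP[of \<theta> "k + 1" \<nu>] \<theta> by (simp add: \<Phi>_def ferrersP_weighted_def)
qed

lemma has_integral_ferrersP_sin_powr_cos:
  assumes k: "k > -1" and \<theta>: "0 < \<theta>" "\<theta> < pi"
  shows "((\<lambda>t. ferrersP (- k) \<nu> (cos t) * (sin t powr (k + 1) * cos t)) has_integral
           sin \<theta> powr (k + 2) * ferrersP (- (k + 2)) \<nu> (cos \<theta>)
           + cos \<theta> * (sin \<theta> powr (k + 1) * ferrersP (- (k + 1)) \<nu> (cos \<theta>))) {0..\<theta>}"
proof -
  define \<Psi> where
    "\<Psi> t = ferrersP_weighted (k + 1 + 1) \<nu> (cos t) + cos t * ferrersP_weighted (k + 1) \<nu> (cos t)" for t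
  have "(\<Psi> has_real_derivative ferrersP (- k) \<nu> (cos t) * (sin t powr (k + 1) * cos t)) (at t)"
    if "t \<in> {0<..<\<theta>}" for t
  proof -
    have t: "0 < t" "t < pi"
      using that \<theta> by auto
    have "sin t > 0"
      using t by (simp add: sin_gt_zero)
    have "(\<Psi> has_real_derivative
            sin t * ferrersP_weighted (k + 1) \<nu> (cos t)
            + (- sin t * ferrersP_weighted (k + 1) \<nu> (cos t) + sin t * ferrersP_weighted k \<nu> (cos t) * cos t))
            (at t)"
      unfolding \<Psi>_def[abs_def] using k t
      by (intro DERIV_add DERIV_mult DERIV_cos ferrersP_weighted_cos_has_real_derivative) auto
    then show ?thesis
      using sin_powr_ferrersP[OF t, of k \<nu>] \<open>sin t > 0\<close> by (simp add: powr_add mult_ac)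
  qed
  then have "((\<lambda>t. ferrersP (- k) \<nu> (cos t) * (sin t powr (k + 1) * cos t)) has_integral \<Psi> \<theta> - \<Psi> 0) {0..\<theta>}"
    using \<theta> k continuous_on_ferrersP_weighted_cos[of "k + 1" \<theta> \<nu>]
      continuous_on_ferrersP_weighted_cos[of "k + 1 + 1" \<theta> \<nu>]
    by (intro fundamental_theorem_of_calculus_interior)
       (auto simp: \<Psi>_def[abs_def] has_real_derivative_iff_has_vector_derivative intro!: continuous_intros)
  moreover have "k + 1 + 1 = k + 2"
    by simp
  ultimately show ?thesis
    using sin_powr_ferrersP[of \<theta> "k + 1" \<nu>] sin_powr_ferrersP[of \<theta> "k + 2" \<nu>] \<theta>
    by (simp add: \<Psi>_def ferrersP_weighted_def)
qed

lemma continuous_on_ferrersP_cos: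
  assumes "k > -1"
  shows "continuous_on {0<..<pi} (\<lambda>t. ferrersP (- k) \<nu> (cos t))"
proof -
  have bounds: "-1 < cos t" "cos t < 1" if "t \<in> {0<..<pi}" for t
    using that cos_gt_minus_one[of t] cos_lt_one[of t] by auto
  then have "\<forall>t\<in>{0<..<pi}. 1 - cos t \<noteq> 0" "\<forall>t\<in>{0<..<pi}. (1 + cos t) / (1 - cos t) \<noteq> 0"
    by fastforce+
  then have "continuous_on {0<..<pi} (\<lambda>t. ((1 + cos t) / (1 - cos t)) powr (- k / 2))"
    by (intro continuous_intros)
  moreover have "isCont (\<lambda>t. hyp2F1_reg (\<nu> + 1) (- \<nu>) (1 + k) ((1 - cos t) / 2)) t"
    if "t \<in> {0<..<pi}" for t
    using assms bounds[OF that]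
    by (intro isCont_o2[OF _ isCont_hyp2F1_reg]) (auto intro!: continuous_intros)
  then have "continuous_on {0<..<pi} (\<lambda>t. hyp2F1_reg (\<nu> + 1) (- \<nu>) (1 + k) ((1 - cos t) / 2))"
    by (intro continuous_at_imp_continuous_on) auto
  ultimately show ?thesis
    unfolding ferrersP_def by (simp add: continuous_on_mult)
qed

lemma ferrersP_sq_bound:
  assumes x: "-1 < x" "x < 1" and p: "p > 0"
    and C: "\<And>z. 0 \<le> z \<Longrightarrow> z < 1 \<Longrightarrow> \<bar>hyp2F1_reg (\<nu> + 1) (- \<nu>) (1 + n) z\<bar> \<le> C * (1 - z) powr (- p)"
  shows "(ferrersP (- n) \<nu> x)\<^sup>2 \<le> C\<^sup>2 * 2 powr (2 * p) * ((1 - x) powr n * (1 + x) powr (- n - 2 * p))"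
proof -
  define F where "F = hyp2F1_reg (\<nu> + 1) (- \<nu>) (1 + n) ((1 - x) / 2)"
  have pos: "1 - x > 0" "1 + x > 0"
    using x by auto
  have "\<bar>F\<bar> \<le> C * ((1 + x) / 2) powr (- p)"
    using C[of "(1 - x) / 2"] x by (simp add: F_def diff_divide_distrib add_divide_distrib)
  then have "F\<^sup>2 \<le> (C * ((1 + x) / 2) powr (- p))\<^sup>2"
    using abs_ge_zero power_mono by (metis power2_abs)
  have "(ferrersP (- n) \<nu> x)\<^sup>2 = (((1 + x) / (1 - x)) powr (- n / 2))\<^sup>2 * F\<^sup>2"
    by (simp add: ferrersP_def F_def power_mult_distrib)
  also have "\<dots> \<le> (((1 + x) / (1 - x)) powr (- n / 2))\<^sup>2 * (C * ((1 + x) / 2) powr (- p))\<^sup>2"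
    using \<open>F\<^sup>2 \<le> _\<close> by (rule mult_left_mono) simp
  also have "\<dots> = C\<^sup>2 * 2 powr (2 * p) * ((1 - x) powr n * (1 + x) powr (- n - 2 * p))"
    using pos by (simp add: powr_def power2_eq_square ln_div field_simps flip: exp_add)
  finally show ?thesis .
qed

section \<open>Square integrability with respect to \<open>sin \<theta> d\<theta>\<close>\<close>

definition L2_sin :: "(real \<Rightarrow> real) \<Rightarrow> bool" where
  "L2_sin f \<longleftrightarrow> f \<in> borel_measurable (lebesgue_on {0<..<pi})
                 \<and> (\<lambda>t. (f t)\<^sup>2 * sin t) integrable_on {0<..<pi}"

lemma L2_sinI:
  assumes "continuous_on {0<..<pi} f" "(\<lambda>t. (f t)\<^sup>2 * sin t) integrable_on {0<..<pi}"
  shows "L2_sin f"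
  using assms continuous_imp_measurable_on_sets_lebesgue[of "{0<..<pi}" f]
  by (simp add: L2_sin_def)

lemma L2_sin_add:
  assumes f: "L2_sin f" and g: "L2_sin g"
  shows "L2_sin (\<lambda>t. f t + g t)"
proof -
  have meas: "(\<lambda>t. f t + g t) \<in> borel_measurable (lebesgue_on {0<..<pi})"
    using f g by (auto simp: L2_sin_def intro: borel_measurable_add)
  have sin: "sin \<in> borel_measurable (lebesgue_on {0<..<pi})"
    by (intro continuous_imp_measurable_on_sets_lebesgue continuous_intros) auto
  have "(\<lambda>t. (f t + g t)\<^sup>2 * sin t) \<in> borel_measurable (lebesgue_on {0<..<pi})"
    using meas sin by (intro borel_measurable_times borel_measurable_power)
  moreover have "(\<lambda>t. 2 * ((f t)\<^sup>2 * sin t) + 2 * ((g t)\<^sup>2 * sin t)) integrable_on {0<..<pi}"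
    using f g unfolding L2_sin_def by (intro integrable_add integrable_on_mult_right) auto
  moreover have "norm ((f t + g t)\<^sup>2 * sin t) \<le> 2 * ((f t)\<^sup>2 * sin t) + 2 * ((g t)\<^sup>2 * sin t)"
    if "t \<in> {0<..<pi}" for t
  proof -
    have "sin t > 0"
      using that by (simp add: sin_gt_zero)
    moreover have "(f t + g t)\<^sup>2 \<le> 2 * (f t)\<^sup>2 + 2 * (g t)\<^sup>2"
      using sum_squares_ge_zero[of "f t - g t" 0] by (simp add: power2_eq_square algebra_simps)
    ultimately show ?thesis
      using mult_right_mono[of "(f t + g t)\<^sup>2" "2 * (f t)\<^sup>2 + 2 * (g t)\<^sup>2" "sin t"]
      by (simp add: algebra_simps)
  qed
  ultimately have "(\<lambda>t. (f t + g t)\<^sup>2 * sin t) integrable_on {0<..<pi}"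
    by (rule measurable_bounded_by_integrable_imp_integrable) simp_all
  with meas show ?thesis
    by (simp add: L2_sin_def)
qed

lemma L2_sin_cmult: "L2_sin f \<Longrightarrow> L2_sin (\<lambda>t. c * f t)"
  using integrable_on_mult_right[of "\<lambda>t. (f t)\<^sup>2 * sin t" "{0<..<pi}" "c\<^sup>2"]
  by (auto simp: L2_sin_def power_mult_distrib mult.assoc intro!: borel_measurable_times)

lemma L2_sin_diff: "L2_sin f \<Longrightarrow> L2_sin g \<Longrightarrow> L2_sin (\<lambda>t. f t - g t)"
  using L2_sin_add[of f "\<lambda>t. (- 1) * g t"] L2_sin_cmult[of g "- 1"] by simp

lemma L2_sin_sum: "(\<And>i. i \<in> I \<Longrightarrow> L2_sin (f i)) \<Longrightarrow> L2_sin (\<lambda>t. \<Sum>i\<in>I. f i t)"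
proof (induction I rule: infinite_finite_induct)
  case (insert i I)
  then show ?case
    using L2_sin_add[of "f i" "\<lambda>t. \<Sum>i\<in>I. f i t"] by simp
qed (simp_all add: L2_sin_def integrable_0)

lemma integrable_one_minus_cos_powr_sin:
  assumes a: "a > -1" and c: "c \<in> {-1, 1}"
  shows "(\<lambda>t. (1 - c * cos t) powr a * sin t) integrable_on {0..pi}"
proof -
  define G where "G t = c * (1 - c * cos t) powr (a + 1) / (a + 1)" for t
  have "continuous_on {0..pi} G"
    unfolding G_def[abs_def] using a c
    by (intro continuous_on_divide continuous_on_mult continuous_on_powr' continuous_intros) auto
  moreover have "(G has_real_derivative (1 - c * cos t) powr a * sin t) (at t)" if "t \<in> {0<..<pi}" for t
  proof -
    have "1 - c * cos t > 0"
      using c that cos_gt_minus_one[of t] cos_lt_one[of t] by auto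
    then have "(G has_real_derivative c * ((a + 1) * (1 - c * cos t) powr a * (c * sin t)) / (a + 1)) (at t)"
      unfolding G_def[abs_def] by (auto intro!: derivative_eq_intros)
    moreover have "c * ((a + 1) * (1 - c * cos t) powr a * (c * sin t)) / (a + 1) = (1 - c * cos t) powr a * sin t"
      using a c by auto
    ultimately show ?thesis
      by simp
  qed
  ultimately have "((\<lambda>t. (1 - c * cos t) powr a * sin t) has_integral G pi - G 0) {0..pi}"
    by (intro fundamental_theorem_of_calculus_interior)
       (auto simp: has_real_derivative_iff_has_vector_derivative)
  then show ?thesis
    by blast
qed

lemma powr_one_minus_mult_one_plus_le:
  fixes x :: real
  assumes "-1 \<le> x" "x \<le> 1"
  shows "(1 - x) powr a * (1 + x) powr b \<le> 2 powr \<bar>b\<bar> * (1 - x) powr a + 2 powr \<bar>a\<bar> * (1 + x) powr b"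
proof (cases "x \<ge> 0")
  case True
  then have "(1 + x) powr b \<le> 2 powr \<bar>b\<bar>"
    using assms by (intro powr_le_two_powr_abs) auto
  then have "(1 - x) powr a * (1 + x) powr b \<le> (1 - x) powr a * 2 powr \<bar>b\<bar>"
    by (intro mult_left_mono) auto
  then have "(1 - x) powr a * (1 + x) powr b \<le> 2 powr \<bar>b\<bar> * (1 - x) powr a"
    by (simp only: mult.commute)
  then show ?thesis
    by (simp add: add_increasing2)
next
  case False
  then have "(1 - x) powr a \<le> 2 powr \<bar>a\<bar>"
    using assms by (intro powr_le_two_powr_abs) auto
  then have "(1 - x) powr a * (1 + x) powr b \<le> 2 powr \<bar>a\<bar> * (1 + x) powr b"
    by (simp add: mult_right_mono)
  then show ?thesis
    by (simp add: add_increasing)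
qed

lemma integrable_one_minus_cos_one_plus_cos_powr:
  assumes "a > -1" "b > -1"
  shows "(\<lambda>t. (1 - cos t) powr a * (1 + cos t) powr b * sin t) integrable_on {0<..<pi}"
proof -
  define g where "g t = 2 powr \<bar>b\<bar> * ((1 - cos t) powr a * sin t) + 2 powr \<bar>a\<bar> * ((1 + cos t) powr b * sin t)"
    for t
  have "\<forall>t\<in>{0<..<pi}. 1 - cos t \<noteq> 0 \<and> 1 + cos t \<noteq> 0"
  proof
    fix t :: real
    assume "t \<in> {0<..<pi}"
    then show "1 - cos t \<noteq> 0 \<and> 1 + cos t \<noteq> 0"
      using cos_gt_minus_one[of t] cos_lt_one[of t] by auto
  qed
  then have "continuous_on {0<..<pi} (\<lambda>t. (1 - cos t) powr a * (1 + cos t) powr b * sin t)"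
    by (intro continuous_intros) auto
  then have "(\<lambda>t. (1 - cos t) powr a * (1 + cos t) powr b * sin t) \<in> borel_measurable (lebesgue_on {0<..<pi})"
    by (rule continuous_imp_measurable_on_sets_lebesgue) simp
  moreover have "g integrable_on {0..pi}"
    using integrable_one_minus_cos_powr_sin[of a 1] integrable_one_minus_cos_powr_sin[of b "- 1"] assms
    unfolding g_def by (intro integrable_add integrable_on_mult_right) auto
  then have "g integrable_on {0<..<pi}"
    by (simp add: integrable_on_Icc_iff_Ioo)
  moreover have "norm ((1 - cos t) powr a * (1 + cos t) powr b * sin t) \<le> g t" if "t \<in> {0<..<pi}" for t
  proof -
    have "sin t \<ge> 0"
      using that by (simp add: sin_ge_zero)
    then have "(1 - cos t) powr a * (1 + cos t) powr b * sin t
               \<le> (2 powr \<bar>b\<bar> * (1 - cos t) powr a + 2 powr \<bar>a\<bar> * (1 + cos t) powr b) * sin t"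
      by (intro mult_right_mono powr_one_minus_mult_one_plus_le) auto
    then show ?thesis
      using \<open>sin t \<ge> 0\<close> by (simp add: g_def algebra_simps)
  qed
  ultimately show ?thesis
    by (rule measurable_bounded_by_integrable_imp_integrable) simp_all
qed

lemma integrable_sin_powr:
  assumes "a > -1"
  shows "(\<lambda>t. sin t powr a) integrable_on {0..pi}"
proof -
  have eq: "(1 - cos t) powr ((a - 1) / 2) * (1 + cos t) powr ((a - 1) / 2) * sin t = sin t powr a"
    if "t \<in> {0<..<pi}" for t
  proof -
    have pos: "sin t > 0" "1 - cos t > 0" "1 + cos t > 0"
      using that cos_gt_minus_one[of t] cos_lt_one[of t] by (auto simp: sin_gt_zero)
    have "(1 - cos t) * (1 + cos t) = sin t ^ 2"
      by (simp add: sin_squared_eq power2_eq_square algebra_simps)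
    then have "(1 - cos t) powr ((a - 1) / 2) * (1 + cos t) powr ((a - 1) / 2) = (sin t ^ 2) powr ((a - 1) / 2)"
      by (simp flip: powr_mult)
    also have "\<dots> = sin t powr (a - 1)"
      using pos by (simp add: powr_def ln_realpow)
    finally show ?thesis
      using pos powr_add_one[of "sin t" "a - 1"] by simp
  qed
  have "(\<lambda>t. (1 - cos t) powr ((a - 1) / 2) * (1 + cos t) powr ((a - 1) / 2) * sin t) integrable_on {0<..<pi}"
    using assms by (intro integrable_one_minus_cos_one_plus_cos_powr) auto
  then have "(\<lambda>t. sin t powr a) integrable_on {0<..<pi}"
    using eq by (rule integrable_eq)
  then show ?thesis
    by (simp add: integrable_on_Icc_iff_Ioo)
qed

lemma L2_sin_sin_powr:
  assumes "n > -1"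
  shows "L2_sin (\<lambda>t. sin t powr n)"
proof (rule L2_sinI)
  have "\<forall>t\<in>{0<..<pi}. sin t \<noteq> 0"
    by (simp add: sin_gt_zero less_imp_neq[symmetric])
  then show "continuous_on {0<..<pi} (\<lambda>t. sin t powr n)"
    by (intro continuous_intros)
  have eq: "sin t powr (2 * n + 1) = (sin t powr n)\<^sup>2 * sin t" if "t \<in> {0<..<pi}" for t
    using that powr_add_one[of "sin t" "2 * n"]
    by (simp add: sin_ge_zero power2_eq_square flip: powr_add)
  have "(\<lambda>t. sin t powr (2 * n + 1)) integrable_on {0<..<pi}"
    using integrable_sin_powr[of "2 * n + 1"] assms by (simp add: integrable_on_Icc_iff_Ioo)
  then show "(\<lambda>t. (sin t powr n)\<^sup>2 * sin t) integrable_on {0<..<pi}"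
    using eq by (rule integrable_eq)
qed

lemma L2_sin_ferrersP:
  assumes n: "-1 < n" "n < 1" and \<nu>: "\<nu> \<ge> 0"
  shows "L2_sin (\<lambda>t. ferrersP (- n) \<nu> (cos t))"
proof (rule L2_sinI)
  show cont: "continuous_on {0<..<pi} (\<lambda>t. ferrersP (- n) \<nu> (cos t))"
    using continuous_on_ferrersP_cos n by simp
  text \<open>Any \<open>p\<close> with \<open>max 0 (- n) \<le> p < (1 - n) / 2\<close> works: the lower bound is needed for
    \<open>hyp2F1_reg_bound\<close>, the upper one for integrability at \<open>t = pi\<close>.\<close>
  define p where "p = (1 + \<bar>n\<bar> - 2 * n) / 4"
  have p: "p > 0" "1 \<le> p + (1 + n)" "- n - 2 * p > -1"
    using n by (auto simp: p_def abs_if field_simps)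
  moreover have "(\<nu> + 1) * (- \<nu>) \<le> p * (1 + n)"
  proof -
    have "(\<nu> + 1) * (- \<nu>) \<le> 0" "0 \<le> p * (1 + n)"
      using p(1) n \<nu> by simp_all
    then show ?thesis
      by linarith
  qed
  ultimately have "\<exists>C. \<forall>z. 0 \<le> z \<longrightarrow> z < 1 \<longrightarrow>
                    \<bar>hyp2F1_reg (\<nu> + 1) (- \<nu>) (1 + n) z\<bar> \<le> C * (1 - z) powr (- p)"
    using n by (intro hyp2F1_reg_bound) auto
  then obtain C where
    C: "\<And>z. 0 \<le> z \<Longrightarrow> z < 1 \<Longrightarrow> \<bar>hyp2F1_reg (\<nu> + 1) (- \<nu>) (1 + n) z\<bar> \<le> C * (1 - z) powr (- p)"
    by blast
  define g where "g t = C\<^sup>2 * 2 powr (2 * p) * ((1 - cos t) powr n * (1 + cos t) powr (- n - 2 * p) * sin t)"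
    for t
  have "(\<lambda>t. (ferrersP (- n) \<nu> (cos t))\<^sup>2 * sin t) \<in> borel_measurable (lebesgue_on {0<..<pi})"
    using cont by (intro continuous_imp_measurable_on_sets_lebesgue continuous_intros) auto
  moreover have "g integrable_on {0<..<pi}"
    unfolding g_def using integrable_one_minus_cos_one_plus_cos_powr p n
    by (intro integrable_on_mult_right) auto
  moreover have "norm ((ferrersP (- n) \<nu> (cos t))\<^sup>2 * sin t) \<le> g t" if "t \<in> {0<..<pi}" for t
  proof -
    have "sin t > 0" "-1 < cos t" "cos t < 1"
      using that cos_gt_minus_one[of t] cos_lt_one[of t] by (auto simp: sin_gt_zero)
    then show ?thesis
      using ferrersP_sq_bound[of "cos t" p \<nu> n C] C p
      by (simp add: g_def mult_right_mono mult.assoc[symmetric])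
  qed
  ultimately show "(\<lambda>t. (ferrersP (- n) \<nu> (cos t))\<^sup>2 * sin t) integrable_on {0<..<pi}"
    by (rule measurable_bounded_by_integrable_imp_integrable) simp_all
qed

section \<open>Radii of curvature of a surface of revolution\<close>

context
  fixes r :: "real \<Rightarrow> real"
  assumes r': "\<And>t. (r has_real_derivative deriv r t) (at t)"
    and r'': "\<And>t. (deriv r has_real_derivative deriv (deriv r) t) (at t)"
begin

lemma radius1_has_real_derivative:
  assumes "sin t \<noteq> 0"
  shows "(radius1 r has_real_derivative astig r t * cos t / sin t) (at t)"
proof -
  have "((\<lambda>t. r t + deriv r t * cos t / sin t) has_real_derivative
          deriv r t + ((deriv (deriv r) t * cos t - deriv r t * sin t) * sin t - deriv r t * cos t * cos t)
                      / (sin t * sin t)) (at t)"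
    using assms by (auto intro!: derivative_eq_intros r' r'')
  moreover have "radius1 r = (\<lambda>t. r t + deriv r t * cos t / sin t)"
    by (simp add: radius1_def fun_eq_iff)
  ultimately show ?thesis
    using assms by (simp add: astig_def radius1_def radius2_def field_simps)
qed

lemma deriv_div_sin_has_real_derivative:
  assumes "sin t \<noteq> 0"
  shows "((\<lambda>t. deriv r t / sin t) has_real_derivative astig r t / sin t) (at t)"
proof -
  have "((\<lambda>t. deriv r t / sin t) has_real_derivative
          (deriv (deriv r) t * sin t - deriv r t * cos t) / (sin t * sin t)) (at t)"
    using assms by (auto intro!: derivative_eq_intros r'')
  then show ?thesis
    using assms by (simp add: astig_def radius1_def radius2_def field_simps)
qed

lemma tendsto_deriv_div_sin:
  assumes "deriv r 0 = 0"
  shows "((\<lambda>t. deriv r t / sin t) \<longlongrightarrow> deriv (deriv r) 0) (at 0)"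
proof -
  have "((\<lambda>t. (deriv r t - deriv r 0) / (t - 0)) \<longlongrightarrow> deriv (deriv r) 0) (at 0)"
    using r''[of 0] by (simp add: has_field_derivative_iff)
  moreover have "((\<lambda>t. (sin t - sin 0) / (t - 0)) \<longlongrightarrow> cos 0) (at (0::real))"
    using DERIV_sin[of 0] by (simp add: has_field_derivative_iff)
  ultimately have "((\<lambda>t. (deriv r t / t) / (sin t / t)) \<longlongrightarrow> deriv (deriv r) 0 / cos 0) (at 0)"
    using assms by (intro tendsto_divide) auto
  moreover have "\<forall>\<^sub>F t in at 0. (deriv r t / t) / (sin t / t) = deriv r t / sin t"
    by (simp add: eventually_at_filter)
  ultimately show ?thesis
    using Lim_transform_eventually by fastforce
qed

lemma tendsto_radius1:
  assumes "deriv r 0 = 0"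
  shows "(radius1 r \<longlongrightarrow> r 0 + deriv (deriv r) 0) (at 0)"
proof -
  have "((\<lambda>t. r t + deriv r t / sin t * cos t) \<longlongrightarrow> r 0 + deriv (deriv r) 0 * cos 0) (at 0)"
    using DERIV_isCont[OF r'[of 0]] tendsto_deriv_div_sin[OF assms]
    by (intro tendsto_intros) (simp_all add: isCont_def)
  then show ?thesis
    by (simp add: radius1_def[abs_def])
qed

lemma has_integral_astig_cot:
  assumes "deriv r 0 = 0" "0 < \<theta>" "\<theta> < pi"
  shows "((\<lambda>t. astig r t * cos t / sin t) has_integral radius1 r \<theta> - (r 0 + deriv (deriv r) 0)) {0..\<theta>}"
proof (rule has_integral_tendsto_at_right)
  show "(radius1 r \<longlongrightarrow> r 0 + deriv (deriv r) 0) (at_right 0)"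
    using tendsto_radius1[OF assms(1)] by (rule tendsto_within_subset) simp
  show "(radius1 r has_real_derivative astig r t * cos t / sin t) (at t)" if "0 < t" "t \<le> \<theta>" for t
    using that assms by (intro radius1_has_real_derivative) (simp add: sin_gt_zero less_imp_neq[symmetric])
qed (use assms in simp)

lemma has_integral_astig_div_sin:
  assumes "deriv r 0 = 0" "0 < \<theta>" "\<theta> < pi"
  shows "((\<lambda>t. astig r t / sin t) has_integral deriv r \<theta> / sin \<theta> - deriv (deriv r) 0) {0..\<theta>}"
proof (rule has_integral_tendsto_at_right[where F = "\<lambda>t. deriv r t / sin t"])
  show "((\<lambda>t. deriv r t / sin t) \<longlongrightarrow> deriv (deriv r) 0) (at_right 0)"
    using tendsto_deriv_div_sin[OF assms(1)] by (rule tendsto_within_subset) simp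
  show "((\<lambda>t. deriv r t / sin t) has_real_derivative astig r t / sin t) (at t)" if "0 < t" "t \<le> \<theta>" for t
    using that assms by (intro deriv_div_sin_has_real_derivative) (simp add: sin_gt_zero less_imp_neq[symmetric])
qed (use assms in simp)

lemma continuous_on_astig:
  assumes "continuous_on UNIV (deriv (deriv r))"
  shows "continuous_on {0<..<pi} (astig r)"
proof -
  have "continuous_on UNIV r" "continuous_on UNIV (deriv r)"
    using DERIV_isCont[OF r'] DERIV_isCont[OF r''] by (simp_all add: continuous_on_eq_continuous_at)
  moreover have "\<forall>t\<in>{0<..<pi}. sin t \<noteq> 0"
    by (simp add: sin_gt_zero less_imp_neq[symmetric])
  ultimately have "continuous_on {0<..<pi} (\<lambda>t. deriv (deriv r) t + r t - (r t + deriv r t * cos t / sin t))"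
    using assms by (intro continuous_intros) (auto intro: continuous_on_subset)
  then show ?thesis
    by (simp add: astig_def[abs_def] radius1_def radius2_def)
qed

end

lemma in_W_has_deriv: "in_W r \<Longrightarrow> (r has_real_derivative deriv r t) (at t)"
  by (simp add: in_W_def)

lemma in_W_has_deriv2: "in_W r \<Longrightarrow> (deriv r has_real_derivative deriv (deriv r) t) (at t)"
  by (simp add: in_W_def)

lemma in_W_deriv_at_0: "in_W r \<Longrightarrow> deriv r 0 = 0"
  using has_real_derivative_even_zero[of r "deriv r 0"] by (simp add: in_W_def)

lemma Lim_radius1:
  assumes "in_W r"
  shows "Lim (at_right 0) (radius1 r) = r 0 + deriv (deriv r) 0"
proof (rule tendsto_Lim)
  show "(radius1 r \<longlongrightarrow> r 0 + deriv (deriv r) 0) (at_right 0)"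
    using tendsto_radius1[OF in_W_has_deriv[OF assms] in_W_has_deriv2[OF assms] in_W_deriv_at_0[OF assms]]
    by (rule tendsto_within_subset) simp
qed simp

section \<open>Term-by-term integration of the astigmatism expansion\<close>

lemma astig_div_sin_powr_mult:
  assumes "0 \<le> sin t"
  shows "astig r t / sin t powr (n + 2) * (sin t powr (n + 1) * c) = astig r t * c / sin t"
proof (cases "sin t = 0")
  case False
  with assms have "sin t powr (n + 2) = sin t powr (n + 1) * sin t"
    using powr_add_one[of "sin t" "n + 1"] by (simp add: add.assoc)
  with False show ?thesis
    by simp
qed simp

definition astig_residual :: "(real \<Rightarrow> real) \<Rightarrow> real \<Rightarrow> (nat \<Rightarrow> real) \<Rightarrow> nat \<Rightarrow> real \<Rightarrow> real" where
  "astig_residual r n \<gamma> M t = astig r t / sin t powr (n + 2) - \<gamma> 0 * sin t powr n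
     - (\<Sum>m\<in>{1..M}. \<gamma> m * ferrersP (- n) (n + real m) (cos t))"

context
  fixes r :: "real \<Rightarrow> real" and n :: real and \<gamma> :: "nat \<Rightarrow> real"
  assumes n: "-1 < n" "n < 1"
    and W: "in_W r"
    and L2: "(\<lambda>\<theta>. (astig r \<theta> / sin \<theta> powr (n + 2))\<^sup>2 * sin \<theta>) integrable_on {0..pi}"
begin

lemma L2_sin_astig_residual: "L2_sin (astig_residual r n \<gamma> M)"
proof -
  have "\<forall>t\<in>{0<..<pi}. sin t \<noteq> 0"
    by (simp add: sin_gt_zero less_imp_neq[symmetric])
  then have "continuous_on {0<..<pi} (\<lambda>t. astig r t / sin t powr (n + 2))"
    using continuous_on_astig[OF in_W_has_deriv[OF W] in_W_has_deriv2[OF W]] W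
    by (intro continuous_intros) (auto simp: in_W_def)
  then have "L2_sin (\<lambda>t. astig r t / sin t powr (n + 2))"
    using L2 by (intro L2_sinI) (simp_all add: integrable_on_Icc_iff_Ioo)
  moreover have "L2_sin (\<lambda>t. \<gamma> 0 * sin t powr n)"
    using n by (intro L2_sin_cmult L2_sin_sin_powr) simp
  moreover have "L2_sin (\<lambda>t. \<Sum>m\<in>{1..M}. \<gamma> m * ferrersP (- n) (n + real m) (cos t))"
    using n by (intro L2_sin_sum L2_sin_cmult L2_sin_ferrersP) auto
  ultimately show ?thesis
    unfolding astig_residual_def[abs_def] by (intro L2_sin_diff)
qed

context
  assumes expansion: "(\<lambda>M. integral {0..pi} (\<lambda>t. (astig_residual r n \<gamma> M t)\<^sup>2 * sin t)) \<longlonglongrightarrow> 0"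
begin

lemma tendsto_integral_astig_residual_mult:
  assumes \<theta>: "0 < \<theta>" "\<theta> < pi"
    and g: "\<And>t. t \<in> {0..\<theta>} \<Longrightarrow> \<bar>g t\<bar> \<le> sin t powr (n + 1)"
    and h_g: "\<And>M. (\<lambda>t. astig_residual r n \<gamma> M t * g t) integrable_on {0..\<theta>}"
  shows "(\<lambda>M. integral {0..\<theta>} (\<lambda>t. astig_residual r n \<gamma> M t * g t)) \<longlonglongrightarrow> 0"
proof -
  define h where "h = astig_residual r n \<gamma>"
  have sin_nonneg: "0 \<le> sin t" if "t \<in> {0..\<theta>}" for t
    using that \<theta> by (simp add: sin_ge_zero)
  have h_sq: "(\<lambda>t. (h M t)\<^sup>2 * sin t) integrable_on {0..pi}" for M
    using L2_sin_astig_residual by (simp add: h_def L2_sin_def integrable_on_Icc_iff_Ioo)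
  have h_sq_\<theta>: "(\<lambda>t. (h M t)\<^sup>2 * sin t) integrable_on {0..\<theta>}" for M
    by (rule integrable_on_subinterval[OF h_sq]) (use \<theta> in auto)
  show ?thesis
    unfolding h_def[symmetric]
  proof (rule tendsto_integral_mult_zero[where w = sin and G = "\<lambda>t. sin t powr (2 * n + 1)"])
    show "(\<lambda>t. sin t powr (2 * n + 1)) integrable_on {0..\<theta>}"
      by (rule integrable_on_subinterval[OF integrable_sin_powr]) (use n \<theta> in auto)
    show "(g t)\<^sup>2 \<le> sin t * sin t powr (2 * n + 1)" if "t \<in> {0..\<theta>}" for t
    proof -
      have "(g t)\<^sup>2 \<le> (sin t powr (n + 1))\<^sup>2"
        using g[OF that] by (metis abs_ge_zero power2_abs power_mono)
      also have "\<dots> = sin t * sin t powr (2 * n + 1)"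
        using powr_add_one[OF sin_nonneg[OF that], of "2 * n + 1"]
        by (simp add: power2_eq_square add_ac flip: powr_add)
      finally show ?thesis .
    qed
    have "0 \<le> integral {0..\<theta>} (\<lambda>t. (h M t)\<^sup>2 * sin t)" for M
      using h_sq_\<theta> sin_nonneg by (intro integral_nonneg) auto
    moreover have "integral {0..\<theta>} (\<lambda>t. (h M t)\<^sup>2 * sin t) \<le> integral {0..pi} (\<lambda>t. (h M t)\<^sup>2 * sin t)"
      for M
      using h_sq_\<theta> h_sq \<theta> by (intro integral_subset_le) (auto simp: sin_ge_zero)
    ultimately show "(\<lambda>M. integral {0..\<theta>} (\<lambda>t. (h M t)\<^sup>2 * sin t)) \<longlonglongrightarrow> 0"
      by (intro tendsto_sandwich[OF _ _ tendsto_const expansion[folded h_def]] always_eventually allI)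
  qed (use h_sq_\<theta> h_g sin_nonneg in \<open>auto simp: h_def\<close>)
qed

lemma tendsto_partial_integrals:
  assumes \<theta>: "0 < \<theta>" "\<theta> < pi"
    and g: "\<And>t. t \<in> {0..\<theta>} \<Longrightarrow> \<bar>g t\<bar> \<le> sin t powr (n + 1)"
    and F: "((\<lambda>t. astig r t / sin t powr (n + 2) * g t) has_integral F) {0..\<theta>}"
    and \<Phi>0: "((\<lambda>t. sin t powr n * g t) has_integral \<Phi> 0) {0..\<theta>}"
    and \<Phi>: "\<And>m. m \<ge> 1 \<Longrightarrow> ((\<lambda>t. ferrersP (- n) (n + real m) (cos t) * g t) has_integral \<Phi> m) {0..\<theta>}"
  shows "(\<lambda>M. \<gamma> 0 * \<Phi> 0 + (\<Sum>m\<in>{1..M}. \<gamma> m * \<Phi> m)) \<longlonglongrightarrow> F"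
proof -
  define S where "S M = \<gamma> 0 * \<Phi> 0 + (\<Sum>m\<in>{1..M}. \<gamma> m * \<Phi> m)" for M
  have h_g: "((\<lambda>t. astig_residual r n \<gamma> M t * g t) has_integral F - S M) {0..\<theta>}" for M
  proof -
    have "((\<lambda>t. astig r t / sin t powr (n + 2) * g t - (\<gamma> 0 * (sin t powr n * g t)
              + (\<Sum>m\<in>{1..M}. \<gamma> m * (ferrersP (- n) (n + real m) (cos t) * g t))))
            has_integral F - S M) {0..\<theta>}"
      unfolding S_def using F \<Phi>0 \<Phi>
      by (intro has_integral_diff has_integral_add has_integral_mult_right has_integral_sum) auto
    moreover have "astig_residual r n \<gamma> M t * g t = astig r t / sin t powr (n + 2) * g t
                     - (\<gamma> 0 * (sin t powr n * g t)
                        + (\<Sum>m\<in>{1..M}. \<gamma> m * (ferrersP (- n) (n + real m) (cos t) * g t)))" for t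
      by (simp add: astig_residual_def left_diff_distrib sum_distrib_right mult.assoc)
    ultimately show ?thesis
      by simp
  qed
  then have "(\<lambda>M. integral {0..\<theta>} (\<lambda>t. astig_residual r n \<gamma> M t * g t)) \<longlonglongrightarrow> 0"
    using \<theta> g by (intro tendsto_integral_astig_residual_mult) blast+
  moreover have "integral {0..\<theta>} (\<lambda>t. astig_residual r n \<gamma> M t * g t) = F - S M" for M
    using h_g by (rule integral_unique)
  ultimately have "(\<lambda>M. F - (F - S M)) \<longlonglongrightarrow> F - 0"
    by (intro tendsto_diff tendsto_const) simp
  then show ?thesis
    by (simp add: S_def)
qed

lemma radius1_sums:
  assumes \<theta>: "0 < \<theta>" "\<theta> < pi"
  shows "(\<lambda>m. \<gamma> (Suc m) * (ferrersP (- (n + 2)) (n + real (Suc m)) (cos \<theta>)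
                  + cos \<theta> / sin \<theta> * ferrersP (- (n + 1)) (n + real (Suc m)) (cos \<theta>)))
           sums ((radius1 r \<theta> - (r 0 + deriv (deriv r) 0) - \<gamma> 0 * (sin \<theta> powr (2 * n + 2) / (2 * n + 2)))
                 / sin \<theta> powr (n + 2))"
proof -
  define \<Phi> where "\<Phi> m = (if m = 0 then sin \<theta> powr (2 * n + 2) / (2 * n + 2)
      else sin \<theta> powr (n + 2) * ferrersP (- (n + 2)) (n + real m) (cos \<theta>)
           + cos \<theta> * (sin \<theta> powr (n + 1) * ferrersP (- (n + 1)) (n + real m) (cos \<theta>)))" for m
  have "(\<lambda>M. \<gamma> 0 * \<Phi> 0 + (\<Sum>m\<in>{1..M}. \<gamma> m * \<Phi> m)) \<longlonglongrightarrow> radius1 r \<theta> - (r 0 + deriv (deriv r) 0)"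
  proof (rule tendsto_partial_integrals[OF \<theta>])
    show "\<bar>sin t powr (n + 1) * cos t\<bar> \<le> sin t powr (n + 1)" for t
      using mult_left_mono[OF abs_cos_le_one, of "sin t powr (n + 1)" t] by (simp add: abs_mult)
    have "((\<lambda>t. astig r t * cos t / sin t) has_integral radius1 r \<theta> - (r 0 + deriv (deriv r) 0)) {0..\<theta>}"
      using in_W_has_deriv[OF W] in_W_has_deriv2[OF W] in_W_deriv_at_0[OF W] \<theta>
      by (rule has_integral_astig_cot)
    then show "((\<lambda>t. astig r t / sin t powr (n + 2) * (sin t powr (n + 1) * cos t)) has_integral
            radius1 r \<theta> - (r 0 + deriv (deriv r) 0)) {0..\<theta>}"
    proof (rule has_integral_eq[rotated])
      fix t
      assume "t \<in> {0..\<theta>}"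
      then have "0 \<le> sin t"
        using \<theta> by (simp add: sin_ge_zero)
      then show "astig r t * cos t / sin t = astig r t / sin t powr (n + 2) * (sin t powr (n + 1) * cos t)"
        by (rule astig_div_sin_powr_mult[symmetric])
    qed
    show "((\<lambda>t. sin t powr n * (sin t powr (n + 1) * cos t)) has_integral \<Phi> 0) {0..\<theta>}"
      using has_integral_sin_powr_cos n \<theta> by (simp add: \<Phi>_def)
    show "((\<lambda>t. ferrersP (- n) (n + real m) (cos t) * (sin t powr (n + 1) * cos t)) has_integral \<Phi> m) {0..\<theta>}"
      if "m \<ge> 1" for m
      using has_integral_ferrersP_sin_powr_cos[of n \<theta> "n + real m"] that n \<theta> by (simp add: \<Phi>_def)
  qed
  from sums_divide[OF sums_Suc_of_tendsto[OF this], of "sin \<theta> powr (n + 2)"]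
  have "(\<lambda>m. \<gamma> (Suc m) * \<Phi> (Suc m) / sin \<theta> powr (n + 2)) sums
          ((radius1 r \<theta> - (r 0 + deriv (deriv r) 0) - \<gamma> 0 * \<Phi> 0) / sin \<theta> powr (n + 2))" .
  moreover have "\<gamma> (Suc m) * \<Phi> (Suc m) / sin \<theta> powr (n + 2) =
        \<gamma> (Suc m) * (ferrersP (- (n + 2)) (n + real (Suc m)) (cos \<theta>)
                  + cos \<theta> / sin \<theta> * ferrersP (- (n + 1)) (n + real (Suc m)) (cos \<theta>))" for m
  proof -
    have "sin \<theta> > 0"
      using \<theta> by (simp add: sin_gt_zero)
    then show ?thesis
      using powr_add_one[of "sin \<theta>" "n + 1"] by (simp add: \<Phi>_def add.assoc field_simps)
  qed
  ultimately show ?thesis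
    by (simp add: \<Phi>_def)
qed

lemma deriv_div_sin_sums:
  assumes \<theta>: "0 < \<theta>" "\<theta> < pi"
  shows "(\<lambda>m. \<gamma> (Suc m) * ferrersP (- (n + 1)) (n + real (Suc m)) (cos \<theta>))
           sums ((deriv r \<theta> / sin \<theta> - deriv (deriv r) 0 - \<gamma> 0 * integral {0..\<theta>} (\<lambda>t. sin t powr (2 * n + 1)))
                 / sin \<theta> powr (n + 1))"
proof -
  define \<Phi> where "\<Phi> m = (if m = 0 then integral {0..\<theta>} (\<lambda>t. sin t powr (2 * n + 1))
      else sin \<theta> powr (n + 1) * ferrersP (- (n + 1)) (n + real m) (cos \<theta>))" for m
  have "(\<lambda>M. \<gamma> 0 * \<Phi> 0 + (\<Sum>m\<in>{1..M}. \<gamma> m * \<Phi> m)) \<longlonglongrightarrow> deriv r \<theta> / sin \<theta> - deriv (deriv r) 0"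
  proof (rule tendsto_partial_integrals[OF \<theta>])
    have "((\<lambda>t. astig r t / sin t) has_integral deriv r \<theta> / sin \<theta> - deriv (deriv r) 0) {0..\<theta>}"
      using in_W_has_deriv[OF W] in_W_has_deriv2[OF W] in_W_deriv_at_0[OF W] \<theta>
      by (rule has_integral_astig_div_sin)
    then show "((\<lambda>t. astig r t / sin t powr (n + 2) * sin t powr (n + 1)) has_integral
            deriv r \<theta> / sin \<theta> - deriv (deriv r) 0) {0..\<theta>}"
    proof (rule has_integral_eq[rotated])
      fix t
      assume "t \<in> {0..\<theta>}"
      then have "0 \<le> sin t"
        using \<theta> by (simp add: sin_ge_zero)
      from astig_div_sin_powr_mult[OF this, where c = 1]
      show "astig r t / sin t = astig r t / sin t powr (n + 2) * sin t powr (n + 1)"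
        by simp
    qed
    have "(\<lambda>t. sin t powr (2 * n + 1)) integrable_on {0..\<theta>}"
      by (rule integrable_on_subinterval[OF integrable_sin_powr]) (use n \<theta> in auto)
    moreover have "sin t powr (2 * n + 1) = sin t powr n * sin t powr (n + 1)" for t
      by (simp add: add_ac flip: powr_add)
    ultimately show "((\<lambda>t. sin t powr n * sin t powr (n + 1)) has_integral \<Phi> 0) {0..\<theta>}"
      by (simp add: \<Phi>_def integrable_integral)
    show "((\<lambda>t. ferrersP (- n) (n + real m) (cos t) * sin t powr (n + 1)) has_integral \<Phi> m) {0..\<theta>}"
      if "m \<ge> 1" for m
      using has_integral_ferrersP_sin_powr[of n \<theta> "n + real m"] that n \<theta> by (simp add: \<Phi>_def)
  qed (simp add: abs_mult)
  from sums_divide[OF sums_Suc_of_tendsto[OF this], of "sin \<theta> powr (n + 1)"]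
  have "(\<lambda>m. \<gamma> (Suc m) * \<Phi> (Suc m) / sin \<theta> powr (n + 1)) sums
          ((deriv r \<theta> / sin \<theta> - deriv (deriv r) 0 - \<gamma> 0 * \<Phi> 0) / sin \<theta> powr (n + 1))" .
  moreover have "sin \<theta> > 0"
    using \<theta> by (simp add: sin_gt_zero)
  ultimately show ?thesis
    by (simp add: \<Phi>_def)
qed

lemma radius1_expansion:
  assumes "0 < \<theta>" "\<theta> < pi"
  defines "b \<equiv> \<lambda>m. \<gamma> (Suc m) * (ferrersP (- (n + 2)) (n + real (Suc m)) (cos \<theta>)
                  + cos \<theta> / sin \<theta> * ferrersP (- (n + 1)) (n + real (Suc m)) (cos \<theta>))"
  shows "summable b \<and>
    radius1 r \<theta> = (r 0 + deriv (deriv r) 0) + \<gamma> 0 / (2 * (n + 1)) * sin \<theta> powr (2 * n + 2)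
      + sin \<theta> powr (n + 2) * (\<Sum>m. b m)"
proof -
  have "sin \<theta> > 0"
    using assms(1,2) by (rule sin_gt_zero)
  then have K: "sin \<theta> powr (n + 2) > 0"
    by simp
  from radius1_sums[OF assms(1,2)] have "summable b"
    and "sin \<theta> powr (n + 2) * (\<Sum>m. b m)
           = radius1 r \<theta> - (r 0 + deriv (deriv r) 0) - \<gamma> 0 * (sin \<theta> powr (2 * n + 2) / (2 * n + 2))"
    using K unfolding b_def by (simp_all add: sums_iff)
  then show ?thesis
    by (simp add: algebra_simps)
qed

lemma support_function_expansion:
  assumes \<theta>: "0 < \<theta>" "\<theta> < pi"
  defines "d \<equiv> \<lambda>m. \<gamma> (Suc m) * ferrersP (- (n + 2)) (n + real (Suc m)) (cos \<theta>)"
  shows "summable d \<and>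
    r \<theta> = (r 0 - (r 0 + deriv (deriv r) 0)) * cos \<theta> + (r 0 + deriv (deriv r) 0)
      + \<gamma> 0 * (sin \<theta> powr (2 * n + 2) / (2 * (n + 1))
                - cos \<theta> * integral {0..\<theta>} (\<lambda>t. sin t powr (2 * n + 1)))
      + sin \<theta> powr (n + 2) * (\<Sum>m. d m)"
proof -
  define s K1 where "s = sin \<theta>" and "K1 = sin \<theta> powr (n + 1)"
  define P1 P2 where "P1 m = ferrersP (- (n + 1)) (n + real (Suc m)) (cos \<theta>)"
    and "P2 m = ferrersP (- (n + 2)) (n + real (Suc m)) (cos \<theta>)" for m
  define X I0 where "X = sin \<theta> powr (2 * n + 2) / (2 * n + 2)"
    and "I0 = integral {0..\<theta>} (\<lambda>t. sin t powr (2 * n + 1))"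
  have s: "s > 0"
    using \<theta> unfolding s_def by (rule sin_gt_zero)
  then have K1: "K1 > 0"
    by (simp add: s_def K1_def)
  have K: "sin \<theta> powr (n + 2) = K1 * s"
    using powr_add_one[of "sin \<theta>" "n + 1"] s by (simp add: s_def K1_def add.assoc)
  have "(\<lambda>m. \<gamma> (Suc m) * (P2 m + cos \<theta> / s * P1 m) - cos \<theta> / s * (\<gamma> (Suc m) * P1 m))
          sums ((radius1 r \<theta> - (r 0 + deriv (deriv r) 0) - \<gamma> 0 * X) / (K1 * s)
                - cos \<theta> / s * ((deriv r \<theta> / s - deriv (deriv r) 0 - \<gamma> 0 * I0) / K1))"
    unfolding P1_def P2_def X_def I0_def s_def K1_def
    by (intro sums_diff sums_mult radius1_sums[OF \<theta>, unfolded K[unfolded s_def K1_def]] deriv_div_sin_sums \<theta>)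
  moreover have "\<gamma> (Suc m) * (P2 m + cos \<theta> / s * P1 m) - cos \<theta> / s * (\<gamma> (Suc m) * P1 m) = d m" for m
    by (simp add: d_def P2_def algebra_simps)
  ultimately have d: "d sums ((radius1 r \<theta> - (r 0 + deriv (deriv r) 0) - \<gamma> 0 * X) / (K1 * s)
                - cos \<theta> / s * ((deriv r \<theta> / s - deriv (deriv r) 0 - \<gamma> 0 * I0) / K1))"
    by simp
  have "K1 * s * (A / (K1 * s) - cos \<theta> / s * (B / K1)) = A - cos \<theta> * B" for A B
    using s K1 by (simp add: field_simps)
  with d have "summable d"
    and "K1 * s * (\<Sum>m. d m) = (radius1 r \<theta> - (r 0 + deriv (deriv r) 0) - \<gamma> 0 * X)
                                - cos \<theta> * (deriv r \<theta> / s - deriv (deriv r) 0 - \<gamma> 0 * I0)"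
    by (simp_all add: sums_iff)
  moreover have "radius1 r \<theta> = r \<theta> + cos \<theta> * (deriv r \<theta> / s)"
    by (simp add: radius1_def s_def)
  moreover have "X = sin \<theta> powr (2 * n + 2) / (2 * (n + 1))"
    by (simp add: X_def algebra_simps)
  ultimately show ?thesis
    by (simp add: K I0_def algebra_simps)
qed

end

end

theorem theorem5p8:
  fixes r :: "real \<Rightarrow> real" and n :: real and \<gamma> :: "nat \<Rightarrow> real"
  assumes n: "-1 < n" "n < 1"
    and W: "in_W r"
    and L2: "(\<lambda>\<theta>. (astig r \<theta> / sin \<theta> powr (n + 2))\<^sup>2 * sin \<theta>) integrable_on {0..pi}"
    and expansion:
      "(\<lambda>M. integral {0..pi} (\<lambda>\<theta>.
          (astig r \<theta> / sin \<theta> powr (n + 2) - \<gamma> 0 * sin \<theta> powr n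
            - (\<Sum>m\<in>{1..M}. \<gamma> m * ferrersP (- n) (n + real m) (cos \<theta>)))\<^sup>2 * sin \<theta>))
       \<longlonglongrightarrow> 0"
  shows "\<forall>\<theta>\<in>{0<..<pi}.
     let C1 = Lim (at_right 0) (radius1 r); C2 = r 0 - C1 in
       summable (\<lambda>m. \<gamma> (Suc m) * (ferrersP (- (n + 2)) (n + real (Suc m)) (cos \<theta>)
                  + cos \<theta> / sin \<theta> * ferrersP (- (n + 1)) (n + real (Suc m)) (cos \<theta>))) \<and>
       radius1 r \<theta> = C1 + \<gamma> 0 / (2 * (n + 1)) * sin \<theta> powr (2 * n + 2)
         + sin \<theta> powr (n + 2) *
           (\<Sum>m. \<gamma> (Suc m) * (ferrersP (- (n + 2)) (n + real (Suc m)) (cos \<theta>)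
                  + cos \<theta> / sin \<theta> * ferrersP (- (n + 1)) (n + real (Suc m)) (cos \<theta>))) \<and>
       summable (\<lambda>m. \<gamma> (Suc m) * ferrersP (- (n + 2)) (n + real (Suc m)) (cos \<theta>)) \<and>
       r \<theta> = C2 * cos \<theta> + C1
         + \<gamma> 0 * (sin \<theta> powr (2 * n + 2) / (2 * (n + 1))
                   - cos \<theta> * integral {0..\<theta>} (\<lambda>t. sin t powr (2 * n + 1)))
         + sin \<theta> powr (n + 2) *
           (\<Sum>m. \<gamma> (Suc m) * ferrersP (- (n + 2)) (n + real (Suc m)) (cos \<theta>))"
proof -
  have residual: "(\<lambda>M. integral {0..pi} (\<lambda>t. (astig_residual r n \<gamma> M t)\<^sup>2 * sin t)) \<longlonglongrightarrow> 0"
    using expansion by (simp add: astig_residual_def)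
  note hyps = n W L2 residual
  show ?thesis
    using radius1_expansion[OF hyps] support_function_expansion[OF hyps] Lim_radius1[OF W]
    by (simp add: Let_def)
qed

end
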